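(* Let $(X,d)$ be a geodesic space such that $\operatorname{Curv}_{loc}X\le 0$ and such that for every triangle $(a_1,a_2,a_3)$ in $X$ the circumradius is attained, i.e. there is $m\in X$ with $\max_i d(m,a_i)=r(a_1,a_2,a_3)$. If $(X,d)$ is a Busemann space, then $\operatorname{Curv} X\leq 0$.
   Context: A geodesic space is a metric space in which any two points $x,y$ are joined by a geodesic, i.e. a path $\gamma\colon[0,1]\to X$ with $\gamma(0)=x,\gamma(1)=y$ and $d(\gamma(s),\gamma(t))=d(x,y)|s-t|$. A geodesic space is Busemann if for all geodesics $\gamma,\eta\colon[0,1]\to X$ the function $t\mapsto d(\gamma(t),\eta(t))$ is convex. A triangle is a triple $(a_1,a_2,a_3)$ of points of $X$; a comparison triangle is a triple $(\bar a_1,\bar a_2,\bar a_3)$ in $\mathbb{R}^2$ with $\|\bar a_i-\bar a_j\|=d(a_i,a_j)$. The circumradius is $r(a_1,a_2,a_3)=\inf_{x\in X}\max_i d(x,a_i)$, and $r(\bar a_1,\bar a_2,\bar a_3)=\min_{x\in\mathbb{R}^2}\max_i\|x-\bar a_i\|$. $\operatorname{Curv}X\le0$ means $r(a_1,a_2,a_3)\le r(\bar a_1,\bar a_2,\bar a_3)$ for every triangle in $X$. $\operatorname{Curv}_{loc}X\le0$ means that every $x\in X$ has a neighborhood $U$ such that this inequality holds for all triangles with vertices in $U$. *)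

theory Defs
  imports "HOL-Analysis.Analysis"
begin

definition is_geodesic :: "(real \<Rightarrow> 'a::metric_space) \<Rightarrow> bool" where
  "is_geodesic g \<longleftrightarrow>
     (\<forall>s\<in>{0..1}. \<forall>t\<in>{0..1}. dist (g s) (g t) = dist (g 0) (g 1) * \<bar>s - t\<bar>)"

definition geodesic_space :: "'a::metric_space itself \<Rightarrow> bool" where
  "geodesic_space _ \<longleftrightarrow>
     (\<forall>x y::'a. \<exists>g. is_geodesic g \<and> g 0 = x \<and> g 1 = y)"

definition busemann_space :: "'a::metric_space itself \<Rightarrow> bool" where
  "busemann_space T \<longleftrightarrow> geodesic_space T \<and>
     (\<forall>g h :: real \<Rightarrow> 'a. is_geodesic g \<longrightarrow> is_geodesic h \<longrightarrow>
        convex_on {0..1} (\<lambda>t. dist (g t) (h t)))"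

definition circumradius :: "'a::metric_space \<Rightarrow> 'a \<Rightarrow> 'a \<Rightarrow> real" where
  "circumradius a1 a2 a3 = (INF x. max (dist x a1) (max (dist x a2) (dist x a3)))"

text \<open>Circumradius in the Euclidean plane (the minimum exists; we use Inf).\<close>
definition plane_circumradius :: "real^2 \<Rightarrow> real^2 \<Rightarrow> real^2 \<Rightarrow> real" where
  "plane_circumradius b1 b2 b3 = (INF x. max (dist x b1) (max (dist x b2) (dist x b3)))"

definition comparison_triangle :: "'a::metric_space \<Rightarrow> 'a \<Rightarrow> 'a \<Rightarrow> real^2 \<Rightarrow> real^2 \<Rightarrow> real^2 \<Rightarrow> bool" where
  "comparison_triangle a1 a2 a3 b1 b2 b3 \<longleftrightarrow>
     dist b1 b2 = dist a1 a2 \<and> dist b2 b3 = dist a2 a3 \<and> dist b1 b3 = dist a1 a3"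

definition circ_ineq :: "'a::metric_space \<Rightarrow> 'a \<Rightarrow> 'a \<Rightarrow> bool" where
  "circ_ineq a1 a2 a3 \<longleftrightarrow>
     (\<forall>b1 b2 b3. comparison_triangle a1 a2 a3 b1 b2 b3 \<longrightarrow>
        circumradius a1 a2 a3 \<le> plane_circumradius b1 b2 b3)"

definition curv_le0 :: "'a::metric_space itself \<Rightarrow> bool" where
  "curv_le0 _ \<longleftrightarrow> (\<forall>a1 a2 a3::'a. circ_ineq a1 a2 a3)"

definition curv_loc_le0 :: "'a::metric_space itself \<Rightarrow> bool" where
  "curv_loc_le0 _ \<longleftrightarrow> (\<forall>x::'a. \<exists>U. open U \<and> x \<in> U \<and>
     (\<forall>a1\<in>U. \<forall>a2\<in>U. \<forall>a3\<in>U. circ_ineq a1 a2 a3))"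

end

theory Submission
  imports Defs
begin

text \<open>
  Let \<open>m\<close> realise the circumradius \<open>R\<close> of a triangle and shrink the triangle towards \<open>m\<close>
  along geodesics by a factor \<open>t\<close>. Busemann convexity makes its sides at most \<open>t\<close> times the
  original ones, and for small \<open>t\<close> it lies in a neighbourhood of \<open>m\<close> where the comparison
  inequality holds. Each vertex moved by at most \<open>(1 - t) R\<close>, so the shrunk triangle has
  circumradius at least \<open>t R\<close>. In the plane, on the other hand, a triangle whose sides are at
  most \<open>t\<close> times those of another has at most \<open>t\<close> times its circumradius: the squared
  circumradius is the largest value of \<open>\<Sum>\<^bsub>i<j\<^esub> \<lambda>\<^sub>i \<lambda>\<^sub>j |b\<^sub>i - b\<^sub>j|\<^sup>2\<close> over barycentric
  weights \<open>\<lambda>\<close>, which is monotone in the side lengths. So for a comparison triangle \<open>b\<close> of the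
  original triangle, \<open>t R \<le> t r(b)\<close>.
\<close>

section \<open>Circumradii of plane triangles\<close>

definition triangle_energy :: "real \<Rightarrow> real \<Rightarrow> real \<Rightarrow> 'a::metric_space \<Rightarrow> 'a \<Rightarrow> 'a \<Rightarrow> real" where
  "triangle_energy l1 l2 l3 p1 p2 p3 =
     l1 * l2 * (dist p1 p2)\<^sup>2 + l1 * l3 * (dist p1 p3)\<^sup>2 + l2 * l3 * (dist p2 p3)\<^sup>2"

lemma weighted_sq_dist_eq:
  fixes x p1 p2 p3 :: "'a::real_inner"
  assumes "l1 + l2 + l3 = 1"
  shows "l1 * (dist x p1)\<^sup>2 + l2 * (dist x p2)\<^sup>2 + l3 * (dist x p3)\<^sup>2
    = (dist x (l1 *\<^sub>R p1 + l2 *\<^sub>R p2 + l3 *\<^sub>R p3))\<^sup>2 + triangle_energy l1 l2 l3 p1 p2 p3"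
proof -
  have l3: "l3 = 1 - l1 - l2" using assms by simp
  show ?thesis
    unfolding triangle_energy_def l3 dist_norm power2_norm_eq_inner
    by (simp add: inner_commute algebra_simps)
qed

text \<open>
  By \<open>weighted_sq_dist_eq\<close> every choice of weights gives a lower bound
  \<open>\<surd>E\<close> for the circumradius; for circumcentre weights the barycentre attains it, so it is a
  circumcentre and \<open>E\<close> is the squared circumradius.
\<close>
definition circumcentre_weights ::
    "real \<Rightarrow> real \<Rightarrow> real \<Rightarrow> 'a::real_normed_vector \<Rightarrow> 'a \<Rightarrow> 'a \<Rightarrow> bool" where
  "circumcentre_weights l1 l2 l3 p1 p2 p3 \<longleftrightarrow>
     0 \<le> l1 \<and> 0 \<le> l2 \<and> 0 \<le> l3 \<and> l1 + l2 + l3 = 1 \<and>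
     (\<forall>p\<in>{p1, p2, p3}.
        (dist (l1 *\<^sub>R p1 + l2 *\<^sub>R p2 + l3 *\<^sub>R p3) p)\<^sup>2 \<le> triangle_energy l1 l2 l3 p1 p2 p3)"

lemma circumcentre_weights_swap12:
  "circumcentre_weights l1 l2 l3 p1 p2 p3 \<Longrightarrow> circumcentre_weights l2 l1 l3 p2 p1 p3"
  unfolding circumcentre_weights_def triangle_energy_def
  by (simp add: dist_commute algebra_simps insert_commute)

lemma circumcentre_weights_swap23:
  "circumcentre_weights l1 l2 l3 p1 p2 p3 \<Longrightarrow> circumcentre_weights l1 l3 l2 p1 p3 p2"
  unfolding circumcentre_weights_def triangle_energy_def
  by (simp add: dist_commute algebra_simps insert_commute)

lemma circumcentre_weights_obtuse:
  fixes p1 p2 p3 :: "'a::real_inner"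
  assumes "inner (p2 - p1) (p3 - p1) \<le> 0"
  shows "circumcentre_weights 0 (1/2) (1/2) p1 p2 p3"
proof -
  define m where "m = midpoint p2 p3"
  have centre: "0 *\<^sub>R p1 + (1/2) *\<^sub>R p2 + (1/2) *\<^sub>R p3 = m"
    by (simp add: m_def midpoint_def scaleR_add_right)
  have "(m - p1) + (m - p1) = (p2 - p1) + (p3 - p1)"
    using midpoint_plus_self[of p2 p3] by (simp add: m_def algebra_simps)
  then have "2 * norm (m - p1) = norm ((p2 - p1) + (p3 - p1))"
    by (metis mult_2 norm_scaleR scaleR_2 abs_numeral)
  also have "\<dots> \<le> norm ((p2 - p1) - (p3 - p1))"
  proof -
    have "(norm ((p2 - p1) + (p3 - p1)))\<^sup>2 \<le> (norm ((p2 - p1) - (p3 - p1)))\<^sup>2"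
      using assms unfolding power2_norm_eq_inner by (simp add: algebra_simps inner_commute)
    then show ?thesis by simp
  qed
  finally have "dist m p1 \<le> dist p2 p3 / 2"
    by (simp add: dist_norm)
  moreover have "dist m p2 = dist p2 p3 / 2" "dist m p3 = dist p2 p3 / 2"
    by (simp_all add: m_def dist_midpoint)
  moreover have "triangle_energy 0 (1/2) (1/2) p1 p2 p3 = (dist p2 p3 / 2)\<^sup>2"
    by (simp add: triangle_energy_def power_divide)
  ultimately show ?thesis
    unfolding circumcentre_weights_def centre by (auto intro!: power_mono)
qed

lemma circumcentre_weights_acute:
  fixes p1 p2 p3 :: "'a::real_inner"
  assumes "0 < inner (p2 - p1) (p3 - p1)" "0 < inner (p1 - p2) (p3 - p2)"
    and "0 < inner (p1 - p3) (p2 - p3)"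
  shows "\<exists>l1 l2 l3. circumcentre_weights l1 l2 l3 p1 p2 p3"
proof -
  define u v where "u = p2 - p1" and "v = p3 - p1"
  define uu vv uv where "uu = inner u u" and "vv = inner v v" and "uv = inner u v"
  have uv: "0 < uv" using assms(1) by (simp add: uv_def u_def v_def)
  have uu: "uv < uu"
    using assms(2) by (simp add: uu_def uv_def u_def v_def algebra_simps inner_commute)
  have vv: "uv < vv"
    using assms(3) by (simp add: vv_def uv_def u_def v_def algebra_simps inner_commute)
  define D where "D = uu * vv - uv\<^sup>2"
  have D: "0 < D"
    using mult_strict_mono[OF uu vv] uv uu by (simp add: D_def power2_eq_square)
  \<comment> \<open>\<open>c = p1 + \<alpha> u + \<beta> v\<close> is the circumcentre: Cramer's rule for
     \<open>\<langle>w, u\<rangle> = |u|\<^sup>2/2\<close>, \<open>\<langle>w, v\<rangle> = |v|\<^sup>2/2\<close>; acuteness makes its barycentric weights positive.\<close>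
  define \<alpha> \<beta> where "\<alpha> = vv * (uu - uv) / (2 * D)" and "\<beta> = uu * (vv - uv) / (2 * D)"
  define w where "w = \<alpha> *\<^sub>R u + \<beta> *\<^sub>R v"
  define c where "c = p1 + w"
  have pos: "0 < \<alpha>" "0 < \<beta>" using D uu vv uv by (simp_all add: \<alpha>_def \<beta>_def)
  have "1 - \<alpha> - \<beta> = uv * ((uu - uv) + (vv - uv)) / (2 * D)"
  proof -
    have "1 - \<alpha> - \<beta> = (2 * D - vv * (uu - uv) - uu * (vv - uv)) / (2 * D)"
      using D by (simp add: \<alpha>_def \<beta>_def field_simps)
    also have "2 * D - vv * (uu - uv) - uu * (vv - uv) = uv * ((uu - uv) + (vv - uv))"
      by (simp add: D_def power2_eq_square algebra_simps)
    finally show ?thesis .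
  qed
  then have nonneg: "0 \<le> 1 - \<alpha> - \<beta>"
    using D uu vv uv by simp
  have centre: "c = (1 - \<alpha> - \<beta>) *\<^sub>R p1 + \<alpha> *\<^sub>R p2 + \<beta> *\<^sub>R p3"
    by (simp add: c_def w_def u_def v_def algebra_simps)
  have "inner w u = \<alpha> * uu + \<beta> * uv" "inner w v = \<alpha> * uv + \<beta> * vv"
    by (simp_all add: w_def uu_def vv_def uv_def inner_add_left inner_commute[of v u])
  moreover have "\<alpha> * uu + \<beta> * uv = uu / 2" "\<alpha> * uv + \<beta> * vv = vv / 2"
    using D by (simp_all add: \<alpha>_def \<beta>_def field_simps)
      (simp_all add: D_def power2_eq_square algebra_simps)
  ultimately have dists: "dist c p1 = norm w" "dist c p2 = norm w" "dist c p3 = norm w"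
    by (simp_all add: c_def u_def v_def dist_norm norm_eq_sqrt_inner uu_def vv_def
        algebra_simps inner_commute)
  have "(1 - \<alpha> - \<beta>) * (norm w)\<^sup>2 + \<alpha> * (norm w)\<^sup>2 + \<beta> * (norm w)\<^sup>2
      = (dist c c)\<^sup>2 + triangle_energy (1 - \<alpha> - \<beta>) \<alpha> \<beta> p1 p2 p3"
    using weighted_sq_dist_eq[of "1 - \<alpha> - \<beta>" \<alpha> \<beta> c p1 p2 p3] by (simp add: dists centre[symmetric])
  then have "triangle_energy (1 - \<alpha> - \<beta>) \<alpha> \<beta> p1 p2 p3 = (norm w)\<^sup>2"
    by (simp add: algebra_simps)
  then have "circumcentre_weights (1 - \<alpha> - \<beta>) \<alpha> \<beta> p1 p2 p3"
    unfolding circumcentre_weights_def centre[symmetric] using pos nonneg dists by auto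
  then show ?thesis by blast
qed

lemma circumcentre_weights_exist:
  fixes p1 p2 p3 :: "'a::real_inner"
  shows "\<exists>l1 l2 l3. circumcentre_weights l1 l2 l3 p1 p2 p3"
proof (cases "inner (p2 - p1) (p3 - p1) \<le> 0")
  case True
  then show ?thesis using circumcentre_weights_obtuse by blast
next
  case acute1: False
  show ?thesis
  proof (cases "inner (p1 - p2) (p3 - p2) \<le> 0")
    case True
    then show ?thesis
      using circumcentre_weights_swap12[OF
          circumcentre_weights_obtuse[where ?p1.0 = p2 and ?p2.0 = p1]] by blast
  next
    case acute2: False
    show ?thesis
    proof (cases "inner (p1 - p3) (p2 - p3) \<le> 0")
      case True
      then show ?thesis
        using circumcentre_weights_swap23[OF circumcentre_weights_swap12[OF
            circumcentre_weights_obtuse[where ?p1.0 = p3 and ?p2.0 = p1 and ?p3.0 = p2]]] by blast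
    next
      case False
      then show ?thesis
        using acute1 acute2 circumcentre_weights_acute by (meson not_le)
    qed
  qed
qed

lemma triangle_energy_le_sq_max_dist:
  fixes x b1 b2 b3 :: "'a::real_inner"
  assumes "0 \<le> l1" "0 \<le> l2" "0 \<le> l3" "l1 + l2 + l3 = 1"
  shows "triangle_energy l1 l2 l3 b1 b2 b3 \<le> (max (dist x b1) (max (dist x b2) (dist x b3)))\<^sup>2"
proof -
  let ?M = "max (dist x b1) (max (dist x b2) (dist x b3))"
  have "triangle_energy l1 l2 l3 b1 b2 b3 \<le> l1 * (dist x b1)\<^sup>2 + l2 * (dist x b2)\<^sup>2 + l3 * (dist x b3)\<^sup>2"
    using weighted_sq_dist_eq[OF assms(4), of x b1 b2 b3] by simp
  also have "\<dots> \<le> l1 * ?M\<^sup>2 + l2 * ?M\<^sup>2 + l3 * ?M\<^sup>2"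
    using assms by (intro add_mono mult_left_mono power_mono) auto
  also have "\<dots> = ?M\<^sup>2"
    using assms(4) by (metis distrib_right mult_1)
  finally show ?thesis .
qed

lemma triangle_energy_mono:
  fixes p1 p2 p3 :: "'a::metric_space" and b1 b2 b3 :: "'b::metric_space"
  assumes "0 \<le> l1" "0 \<le> l2" "0 \<le> l3" "0 \<le> t"
    and "dist p1 p2 \<le> t * dist b1 b2" "dist p1 p3 \<le> t * dist b1 b3" "dist p2 p3 \<le> t * dist b2 b3"
  shows "triangle_energy l1 l2 l3 p1 p2 p3 \<le> t\<^sup>2 * triangle_energy l1 l2 l3 b1 b2 b3"
proof -
  have sq: "(dist p p')\<^sup>2 \<le> t\<^sup>2 * (dist b b')\<^sup>2"
    if "dist p p' \<le> t * dist b b'" for p p' :: 'a and b b' :: 'b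
    using power_mono[OF that zero_le_dist] by (simp add: power_mult_distrib)
  show ?thesis
    unfolding triangle_energy_def
    using mult_left_mono[OF sq[OF assms(5)], of "l1 * l2"]
      mult_left_mono[OF sq[OF assms(6)], of "l1 * l3"]
      mult_left_mono[OF sq[OF assms(7)], of "l2 * l3"] assms(1-3)
    by (simp add: algebra_simps)
qed

lemma bdd_below_max_dist: "bdd_below (range (\<lambda>x. max (dist x a1) (max (dist x a2) (dist x a3))))"
  by (rule bdd_belowI[of _ 0]) (auto simp: le_max_iff_disj)

lemma plane_circumradius_le_scaled:
  fixes p1 p2 p3 b1 b2 b3 :: "real^2"
  assumes "0 \<le> t"
    and "dist p1 p2 \<le> t * dist b1 b2" "dist p1 p3 \<le> t * dist b1 b3" "dist p2 p3 \<le> t * dist b2 b3"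
  shows "plane_circumradius p1 p2 p3 \<le> t * plane_circumradius b1 b2 b3"
proof -
  obtain l1 l2 l3 where l: "circumcentre_weights l1 l2 l3 p1 p2 p3"
    using circumcentre_weights_exist by blast
  then have weights: "0 \<le> l1" "0 \<le> l2" "0 \<le> l3" "l1 + l2 + l3 = 1"
    by (simp_all add: circumcentre_weights_def)
  let ?E = "\<lambda>q1 q2 q3. sqrt (triangle_energy l1 l2 l3 q1 q2 q3)"
  have "plane_circumradius p1 p2 p3 \<le> ?E p1 p2 p3"
    unfolding plane_circumradius_def
    using l by (intro cINF_lower2[OF bdd_below_max_dist, of "l1 *\<^sub>R p1 + l2 *\<^sub>R p2 + l3 *\<^sub>R p3"])
      (auto simp: circumcentre_weights_def real_le_rsqrt)
  also have "\<dots> \<le> sqrt (t\<^sup>2 * triangle_energy l1 l2 l3 b1 b2 b3)"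
    using triangle_energy_mono[OF weights(1-3) assms] by simp
  also have "\<dots> = t * ?E b1 b2 b3"
    using assms(1) by (simp add: real_sqrt_mult)
  also have "\<dots> \<le> t * plane_circumradius b1 b2 b3"
    unfolding plane_circumradius_def
    using triangle_energy_le_sq_max_dist[OF weights] assms(1)
    by (intro mult_left_mono cINF_greatest real_le_lsqrt) (auto simp: le_max_iff_disj)
  finally show ?thesis .
qed

lemma plane_triangle_exists:
  fixes c e a :: real
  assumes "0 \<le> c" "0 \<le> e" "a \<le> c + e" "c \<le> a + e" "e \<le> c + a"
  shows "\<exists>b1 b2 b3::real^2. dist b1 b2 = c \<and> dist b2 b3 = a \<and> dist b1 b3 = e"
proof -
  have dist_vector:
    "dist (vector [x1, y1] :: real^2) (vector [x2, y2]) = sqrt ((x1 - x2)\<^sup>2 + (y1 - y2)\<^sup>2)"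
    for x1 y1 x2 y2 :: real
    by (simp add: dist_vec_def L2_set_def sum_2 dist_real_def power2_abs)
  \<comment> \<open>Vertices \<open>(0, 0)\<close>, \<open>(c, 0)\<close>, \<open>(x, y)\<close>, with \<open>x\<close> from the law of cosines.\<close>
  define x where "x = (c\<^sup>2 + e\<^sup>2 - a\<^sup>2) / (2 * c)"
  define y where "y = sqrt (e\<^sup>2 - x\<^sup>2)"
  have "x\<^sup>2 \<le> e\<^sup>2"
  proof (cases "c = 0")
    case False
    have "\<bar>c - e\<bar> \<le> a" using assms by linarith
    then have "(c - e)\<^sup>2 \<le> a\<^sup>2" using power_mono[of "\<bar>c - e\<bar>" a 2] by simp
    moreover have "a\<^sup>2 \<le> (c + e)\<^sup>2" using assms by (intro power_mono) auto
    ultimately have "\<bar>c\<^sup>2 + e\<^sup>2 - a\<^sup>2\<bar> \<le> e * (2 * c)"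
      unfolding abs_le_iff power2_eq_square by (simp add: algebra_simps)
    then have "\<bar>x\<bar> \<le> \<bar>e\<bar>"
      using False assms(1,2) by (simp add: x_def abs_divide divide_le_eq)
    then show ?thesis by (simp add: abs_le_square_iff)
  qed (simp add: x_def)
  then have y: "y\<^sup>2 = e\<^sup>2 - x\<^sup>2" by (simp add: y_def)
  have "(c - x)\<^sup>2 + y\<^sup>2 = a\<^sup>2"
  proof (cases "c = 0")
    case True
    then show ?thesis using assms y by (simp add: x_def)
  next
    case False
    then have "2 * c * x = c\<^sup>2 + e\<^sup>2 - a\<^sup>2" by (simp add: x_def)
    then show ?thesis using y by (simp add: power2_eq_square algebra_simps)
  qed
  then have "dist (vector [0, 0] :: real^2) (vector [c, 0]) = c"
    "dist (vector [c, 0] :: real^2) (vector [x, y]) = a"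
    "dist (vector [0, 0] :: real^2) (vector [x, y]) = e"
    using assms y by (simp_all add: dist_vector)
  then show ?thesis by blast
qed

section \<open>Shrinking a triangle towards its circumcentre\<close>

lemma comparison_triangle_exists: "\<exists>b1 b2 b3. comparison_triangle a1 a2 a3 b1 b2 b3"
  unfolding comparison_triangle_def
  using dist_triangle[of a1 a2 a3] dist_triangle[of a2 a3 a1] dist_triangle[of a1 a3 a2]
  by (intro plane_triangle_exists) (simp_all add: dist_commute)

lemma circumradius_le_add:
  assumes "dist a1 b1 \<le> s" "dist a2 b2 \<le> s" "dist a3 b3 \<le> s"
  shows "circumradius a1 a2 a3 \<le> circumradius b1 b2 b3 + s"
proof -
  have "circumradius a1 a2 a3 - s \<le> max (dist x b1) (max (dist x b2) (dist x b3))" for x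
  proof -
    have "circumradius a1 a2 a3 \<le> max (dist x a1) (max (dist x a2) (dist x a3))"
      unfolding circumradius_def by (rule cINF_lower[OF bdd_below_max_dist UNIV_I])
    also have "\<dots> \<le> max (dist x b1) (max (dist x b2) (dist x b3)) + s"
      using assms dist_triangle[of x a1 b1] dist_triangle[of x a2 b2] dist_triangle[of x a3 b3]
      by (simp add: dist_commute le_max_iff_disj) linarith
    finally show ?thesis by simp
  qed
  then have "circumradius a1 a2 a3 - s \<le> circumradius b1 b2 b3"
    unfolding circumradius_def[of b1 b2 b3] by (intro cINF_greatest) auto
  then show ?thesis by simp
qed

lemma circ_ineq_of_scaled_triangle:
  fixes a1 a2 a3 a1' a2' a3' :: "'a::metric_space"
  assumes "0 < t" "circ_ineq a1' a2' a3'"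
    and "dist a1' a2' \<le> t * dist a1 a2" "dist a1' a3' \<le> t * dist a1 a3" "dist a2' a3' \<le> t * dist a2 a3"
    and "circumradius a1 a2 a3 \<le> circumradius a1' a2' a3' + (1 - t) * circumradius a1 a2 a3"
  shows "circ_ineq a1 a2 a3"
  unfolding circ_ineq_def
proof (intro allI impI)
  fix b1 b2 b3
  assume "comparison_triangle a1 a2 a3 b1 b2 b3"
  then have b: "dist b1 b2 = dist a1 a2" "dist b1 b3 = dist a1 a3" "dist b2 b3 = dist a2 a3"
    by (simp_all add: comparison_triangle_def)
  obtain c1 c2 c3 where c: "comparison_triangle a1' a2' a3' c1 c2 c3"
    using comparison_triangle_exists by blast
  have "circumradius a1' a2' a3' \<le> plane_circumradius c1 c2 c3"
    using assms(2) c by (simp add: circ_ineq_def)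
  also have "\<dots> \<le> t * plane_circumradius b1 b2 b3"
    using assms(1,3-5) c b by (intro plane_circumradius_le_scaled) (simp_all add: comparison_triangle_def)
  finally have "t * circumradius a1 a2 a3 \<le> t * plane_circumradius b1 b2 b3"
    using assms(6) by (simp add: algebra_simps)
  then show "circumradius a1 a2 a3 \<le> plane_circumradius b1 b2 b3"
    using assms(1) by simp
qed

lemma is_geodesic_dist:
  assumes "is_geodesic g" "t \<in> {0..1}"
  shows "dist (g 0) (g t) = t * dist (g 0) (g 1)"
    and "dist (g t) (g 1) = (1 - t) * dist (g 0) (g 1)"
proof -
  have "dist (g s) (g s') = dist (g 0) (g 1) * \<bar>s - s'\<bar>" if "s \<in> {0..1}" "s' \<in> {0..1}" for s s'
    using assms(1) that unfolding is_geodesic_def by blast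
  from this[of 0 t] this[of t 1] assms(2)
  show "dist (g 0) (g t) = t * dist (g 0) (g 1)" "dist (g t) (g 1) = (1 - t) * dist (g 0) (g 1)"
    by simp_all
qed

lemma busemann_dist_le:
  fixes g h :: "real \<Rightarrow> 'a::metric_space"
  assumes "busemann_space TYPE('a)" "is_geodesic g" "is_geodesic h" "g 0 = h 0" "t \<in> {0..1}"
  shows "dist (g t) (h t) \<le> t * dist (g 1) (h 1)"
proof -
  have "convex_on {0..1} (\<lambda>s. dist (g s) (h s))"
    using assms(1-3) unfolding busemann_space_def by blast
  then have "dist (g ((1 - t) *\<^sub>R 0 + t *\<^sub>R 1)) (h ((1 - t) *\<^sub>R 0 + t *\<^sub>R 1))
      \<le> (1 - t) * dist (g 0) (h 0) + t * dist (g 1) (h 1)"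
    using assms(5) by (intro convex_onD) auto
  then show ?thesis
    using assms(4) by simp
qed

lemma circ_ineq_if_local_at_circumcentre:
  fixes a1 a2 a3 m :: "'a::metric_space"
  assumes busemann: "busemann_space TYPE('a)"
    and U: "open U" "m \<in> U" "\<forall>a1\<in>U. \<forall>a2\<in>U. \<forall>a3\<in>U. circ_ineq a1 a2 a3"
    and centre: "max (dist m a1) (max (dist m a2) (dist m a3)) = circumradius a1 a2 a3"
  shows "circ_ineq a1 a2 a3"
proof -
  define R where "R = circumradius a1 a2 a3"
  have R: "dist m a1 \<le> R" "dist m a2 \<le> R" "dist m a3 \<le> R"
    using centre by (simp_all flip: R_def)
  obtain \<epsilon> where \<epsilon>: "0 < \<epsilon>" "ball m \<epsilon> \<subseteq> U"
    using U(1,2) open_contains_ball_eq by blast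
  define t where "t = min 1 (\<epsilon> / (2 * (R + 1)))"
  have R0: "0 \<le> R" using R(1) zero_le_dist[of m a1] by linarith
  have t: "0 < t" "t \<in> {0..1}"
    using R0 \<epsilon>(1) by (auto simp: t_def)
  have "t * R \<le> \<epsilon> / (2 * (R + 1)) * (R + 1)"
    using R0 \<epsilon>(1) by (intro mult_mono) (auto simp: t_def)
  also have "\<dots> = \<epsilon> / 2"
    using R0 by (simp add: field_simps)
  finally have tR: "t * R < \<epsilon>" using \<epsilon>(1) by simp
  have shrink: "g t \<in> U" "dist a (g t) \<le> (1 - t) * R"
    if "is_geodesic g" "g 0 = m" "g 1 = a" "dist m a \<le> R" for g a
  proof -
    have "dist m (g t) = t * dist m a"
      using is_geodesic_dist(1)[OF that(1) t(2)] that(2,3) by simp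
    also have "\<dots> \<le> t * R" using that(4) t(1) by simp
    also have "\<dots> < \<epsilon>" by (rule tR)
    finally show "g t \<in> U" using \<epsilon>(2) by auto
    have "dist a (g t) = (1 - t) * dist m a"
      using is_geodesic_dist(2)[OF that(1) t(2)] that(2,3) by (simp add: dist_commute)
    also have "\<dots> \<le> (1 - t) * R" using that(4) t(2) by (simp add: mult_left_mono)
    finally show "dist a (g t) \<le> (1 - t) * R" .
  qed
  have "\<exists>g. is_geodesic g \<and> g 0 = m \<and> g 1 = a" for a
    using busemann unfolding busemann_space_def geodesic_space_def by blast
  then obtain g1 g2 g3 where g: "is_geodesic g1" "g1 0 = m" "g1 1 = a1"
    "is_geodesic g2" "g2 0 = m" "g2 1 = a2" "is_geodesic g3" "g3 0 = m" "g3 1 = a3"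
    by metis
  have near: "g1 t \<in> U" "dist a1 (g1 t) \<le> (1 - t) * R"
    "g2 t \<in> U" "dist a2 (g2 t) \<le> (1 - t) * R" "g3 t \<in> U" "dist a3 (g3 t) \<le> (1 - t) * R"
    using shrink[OF g(1-3) R(1)] shrink[OF g(4-6) R(2)] shrink[OF g(7-9) R(3)] by auto
  show ?thesis
  proof (rule circ_ineq_of_scaled_triangle[OF t(1)])
    show "circ_ineq (g1 t) (g2 t) (g3 t)"
      using U(3) near by simp
    show "dist (g1 t) (g2 t) \<le> t * dist a1 a2"
      using busemann_dist_le[OF busemann g(1,4) _ t(2)] g by simp
    show "dist (g1 t) (g3 t) \<le> t * dist a1 a3"
      using busemann_dist_le[OF busemann g(1,7) _ t(2)] g by simp
    show "dist (g2 t) (g3 t) \<le> t * dist a2 a3"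
      using busemann_dist_le[OF busemann g(4,7) _ t(2)] g by simp
    show "circumradius a1 a2 a3 \<le> circumradius (g1 t) (g2 t) (g3 t) + (1 - t) * circumradius a1 a2 a3"
      using near unfolding R_def by (intro circumradius_le_add)
  qed
qed

theorem mainTheorem5:
  assumes "geodesic_space TYPE('a::metric_space)"
    and "curv_loc_le0 TYPE('a)"
    and "\<forall>a1 a2 a3::'a. \<exists>m. max (dist m a1) (max (dist m a2) (dist m a3))
                              = circumradius a1 a2 a3"
    and "busemann_space TYPE('a)"
  shows "curv_le0 TYPE('a)"
  \<comment> \<open>The first hypothesis is part of \<open>busemann_space\<close>.\<close>
  unfolding curv_le0_def
proof (intro allI)
  fix a1 a2 a3 :: 'a
  obtain m where m: "max (dist m a1) (max (dist m a2) (dist m a3)) = circumradius a1 a2 a3"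
    using assms(3) by blast
  obtain U where U: "open U" "m \<in> U" "\<forall>a1\<in>U. \<forall>a2\<in>U. \<forall>a3\<in>U. circ_ineq a1 a2 a3"
    using assms(2) unfolding curv_loc_le0_def by (elim allE[of _ m] exE) blast
  show "circ_ineq a1 a2 a3"
    by (rule circ_ineq_if_local_at_circumcentre[OF assms(4) U m])
qed

end
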